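(* Let $M=B\circ S$ with $S$ subsampling without replacement with batch size $q$, and let the batch relation be the substitution relation $\simeq_\Delta$ with induced distance $d_\Delta$. Then for every $\alpha>1$ and all datasets $x\simeq_\Delta x'$ of size $N$, $$\Lambda_\alpha(m_x\|m_{x'})\le\max_{y^{(1)}_1,y^{(1)}_2,y^{(2)}_1,y^{(2)}_2\in\mathbb Y}\Lambda_\alpha\big((1-w)b_{y^{(1)}_1}+w\,b_{y^{(1)}_2}\ \big\|\ (1-w)b_{y^{(2)}_1}+w\,b_{y^{(2)}_2}\big)$$ subject to $y^{(1)}_1=y^{(2)}_1$, $d_\Delta(y^{(1)}_1,y^{(1)}_2)\le1$, $d_\Delta(y^{(1)}_1,y^{(2)}_2)\le1$, $d_\Delta(y^{(1)}_2,y^{(2)}_2)\le1$, where $w=q/N$.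
   Context: Finite set $\mathbb A$, datasets are subsets of $\mathbb A$ with more than $q$ elements; batches are subsets of size $q$. Subsampling without replacement with batch size $q$: $s_x(y)=\binom{|x|}{q}^{-1}$ for $y\subseteq x$, $|y|=q$. $B$ assigns a density $b_y$ on $\mathbb R^D$ to each batch; $m_x=\sum_y b_y s_x(y)$. Substitution relation: $u\simeq_\Delta u'$ iff $u'=(u\setminus\{a\})\cup\{a'\}$ for some $a\in u$, $a'\notin u$ (used both for datasets and batches); $d_\Delta$ is the induced distance (length of shortest chain of neighbors, $0$ from a set to itself). $\Lambda_\alpha(p\|q)=\int p^\alpha q^{1-\alpha}dz$. *)

theory Defs
  imports "HOL-Analysis.Analysis" "HOL-Library.Extended_Nat"
begin

definition batches :: "nat \<Rightarrow> 'a set set" where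
  "batches q = {y. card y = q}"

definition subsample :: "nat \<Rightarrow> 'a set \<Rightarrow> 'a set \<Rightarrow> real" where
  "subsample q x y = (if y \<subseteq> x \<and> card y = q then 1 / real (card x choose q) else 0)"

definition mech :: "('a set \<Rightarrow> 'b \<Rightarrow> real) \<Rightarrow> nat \<Rightarrow> 'a set \<Rightarrow> 'b \<Rightarrow> real" where
  "mech B q x z = (\<Sum>y\<in>batches q. B y z * subsample q x y)"

definition subst_nb :: "'a set \<Rightarrow> 'a set \<Rightarrow> bool" where
  "subst_nb u u' \<longleftrightarrow> (\<exists>a\<in>u. \<exists>a'. a' \<notin> u \<and> u' = insert a' (u - {a}))"

definition subst_dist :: "'a set \<Rightarrow> 'a set \<Rightarrow> enat" where
  "subst_dist u u' = (if \<exists>n. (subst_nb ^^ n) u u'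
     then enat (LEAST n. (subst_nb ^^ n) u u') else \<infinity>)"

definition is_density :: "('b::euclidean_space \<Rightarrow> real) \<Rightarrow> bool" where
  "is_density f \<longleftrightarrow> f \<in> borel_measurable lborel \<and> (\<forall>z. 0 \<le> f z)
     \<and> (\<integral>\<^sup>+ z. ennreal (f z) \<partial>lborel) = 1"

definition renyi_Lambda :: "real \<Rightarrow> ('b::euclidean_space \<Rightarrow> real) \<Rightarrow> ('b \<Rightarrow> real) \<Rightarrow> ennreal" where
  "renyi_Lambda \<alpha> p q = (\<integral>\<^sup>+ z. (if q z = 0 then (if p z = 0 then 0 else \<infinity>)
       else ennreal (p z powr \<alpha> * q z powr (1 - \<alpha>))) \<partial>lborel)"

end

theory Submission
  imports Defs
begin

text \<open>
  Let \<open>x' = x - {a} \<union> {a'}\<close>. Sampling a \<open>q\<close>-subset of \<open>x\<close> uniformly is the same as choosing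
  uniformly a \<open>q\<close>-subset \<open>y\<close> of \<open>x - {a}\<close> and an element \<open>c \<in> y\<close>, and then keeping \<open>y\<close> with
  probability \<open>1 - w\<close> or replacing \<open>c\<close> by \<open>a\<close> with probability \<open>w = q/N\<close>; replacing \<open>c\<close> by
  \<open>a'\<close> instead samples from \<open>x'\<close>. Hence \<open>m\<^sub>x\<close> and \<open>m\<^sub>x\<^sub>'\<close> are the same uniform average, over
  the pairs \<open>(y, c)\<close>, of the two-component mixtures based on \<open>y\<close>, \<open>y[c := a]\<close> and \<open>y[c := a']\<close>,
  three batches that are pairwise neighbours. Since \<open>(s, t) \<mapsto> s\<^sup>\<alpha> t\<^sup>1\<^sup>-\<^sup>\<alpha>\<close> is jointly
  convex (the perspective of the convex function \<open>s\<^sup>\<alpha>\<close>), \<open>\<Lambda>\<^sub>\<alpha>\<close> of the averages is at most the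
  average of the \<open>\<Lambda>\<^sub>\<alpha>\<close> of the mixtures, and each of these is bounded by the maximum.
\<close>

lemma sum_powr_perspective_le:
  fixes lam p q :: "'i \<Rightarrow> real"
  assumes fin: "finite I" and "I \<noteq> {}"
    and pos: "\<And>i. i \<in> I \<Longrightarrow> lam i > 0 \<and> p i > 0 \<and> q i > 0" and alpha: "\<alpha> > 1"
  shows "(\<Sum>i\<in>I. lam i * p i) powr \<alpha> * (\<Sum>i\<in>I. lam i * q i) powr (1 - \<alpha>)
     \<le> (\<Sum>i\<in>I. lam i * (p i powr \<alpha> * q i powr (1 - \<alpha>)))"
proof -
  define P where "P = (\<Sum>i\<in>I. lam i * p i)"
  define Q where "Q = (\<Sum>i\<in>I. lam i * q i)"
  define \<mu> where "\<mu> i = lam i * q i / Q" for i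
  define t where "t i = p i / q i" for i
  have P_pos: "P > 0" and Q_pos: "Q > 0"
    unfolding P_def Q_def using fin \<open>I \<noteq> {}\<close> pos by (auto intro!: sum_pos)
  have "(\<lambda>s. s powr \<alpha>) (\<Sum>i\<in>I. \<mu> i *\<^sub>R t i) \<le> (\<Sum>i\<in>I. \<mu> i * (\<lambda>s. s powr \<alpha>) (t i))"
  proof (rule convex_on_sum[OF fin \<open>I \<noteq> {}\<close> powr_convex[of \<alpha>]])
    show "sum \<mu> I = 1"
      using Q_pos by (simp add: \<mu>_def Q_def sum_divide_distrib[symmetric])
  qed (use alpha pos Q_pos in \<open>auto simp: \<mu>_def t_def less_imp_le\<close>)
  moreover have "(\<Sum>i\<in>I. \<mu> i *\<^sub>R t i) = P / Q"
    unfolding \<mu>_def t_def P_def by (auto simp: sum_divide_distrib intro!: sum.cong dest: pos)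
  ultimately have jensen: "(P / Q) powr \<alpha> \<le> (\<Sum>i\<in>I. \<mu> i * t i powr \<alpha>)" by simp
  have "P powr \<alpha> * Q powr (1 - \<alpha>) = Q * (P / Q) powr \<alpha>"
    using P_pos Q_pos by (simp add: powr_divide powr_diff)
  also have "\<dots> \<le> Q * (\<Sum>i\<in>I. \<mu> i * t i powr \<alpha>)" using jensen Q_pos by simp
  also have "\<dots> = (\<Sum>i\<in>I. lam i * (p i powr \<alpha> * q i powr (1 - \<alpha>)))"
    unfolding sum_distrib_left
  proof (rule sum.cong)
    fix i assume "i \<in> I"
    with pos[of i] Q_pos show "Q * (\<mu> i * t i powr \<alpha>) = lam i * (p i powr \<alpha> * q i powr (1 - \<alpha>))"
      by (simp add: \<mu>_def t_def powr_divide powr_diff)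
  qed simp
  finally show ?thesis unfolding P_def Q_def .
qed

definition renyi_integrand :: "real \<Rightarrow> real \<Rightarrow> real \<Rightarrow> ennreal" where
  "renyi_integrand \<alpha> a b =
     (if b = 0 then (if a = 0 then 0 else \<infinity>) else ennreal (a powr \<alpha> * b powr (1 - \<alpha>)))"

lemma renyi_Lambda_eq_nn_integral:
  "renyi_Lambda \<alpha> p q = (\<integral>\<^sup>+ z. renyi_integrand \<alpha> (p z) (q z) \<partial>lborel)"
  unfolding renyi_Lambda_def renyi_integrand_def ..

lemma borel_measurable_renyi_integrand:
  assumes "f \<in> borel_measurable M" "g \<in> borel_measurable M"
  shows "(\<lambda>z. renyi_integrand \<alpha> (f z) (g z)) \<in> borel_measurable M"
  unfolding renyi_integrand_def using assms by measurable

lemma renyi_integrand_sum_le: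
  fixes lam p q :: "'i \<Rightarrow> real"
  assumes fin: "finite I" and nonneg: "\<And>i. i \<in> I \<Longrightarrow> lam i \<ge> 0 \<and> p i \<ge> 0 \<and> q i \<ge> 0"
    and alpha: "\<alpha> > 1"
  shows "renyi_integrand \<alpha> (\<Sum>i\<in>I. lam i * p i) (\<Sum>i\<in>I. lam i * q i)
     \<le> (\<Sum>i\<in>I. ennreal (lam i) * renyi_integrand \<alpha> (p i) (q i))"
proof (cases "\<exists>i\<in>I. lam i > 0 \<and> p i > 0 \<and> q i = 0")
  case True
  then obtain i where i: "i \<in> I" "lam i > 0" "p i > 0" "q i = 0" by blast
  then have "\<infinity> = ennreal (lam i) * renyi_integrand \<alpha> (p i) (q i)"
    by (simp add: renyi_integrand_def)
  also have "\<dots> \<le> (\<Sum>i\<in>I. ennreal (lam i) * renyi_integrand \<alpha> (p i) (q i))"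
    by (rule member_le_sum[OF i(1)]) (simp_all add: fin)
  finally show ?thesis by (simp add: top_unique)
next
  case False
  define J where "J = {i \<in> I. lam i > 0 \<and> p i > 0}"
  have "J \<subseteq> I" "finite J" using fin by (auto simp: J_def)
  have pos: "lam i > 0 \<and> p i > 0 \<and> q i > 0" if "i \<in> J" for i
    using False nonneg that unfolding J_def by force
  define P where "P = (\<Sum>i\<in>I. lam i * p i)"
  define Q where "Q = (\<Sum>i\<in>I. lam i * q i)"
  define Q\<^sub>J where "Q\<^sub>J = (\<Sum>i\<in>J. lam i * q i)"
  have P_eq: "P = (\<Sum>i\<in>J. lam i * p i)"
    unfolding P_def by (rule sum.mono_neutral_right[OF fin \<open>J \<subseteq> I\<close>]) (use nonneg in \<open>force simp: J_def\<close>)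
  show ?thesis
  proof (cases "J = {}")
    case True
    with alpha show ?thesis by (simp add: renyi_integrand_def P_eq flip: P_def)
  next
    case False
    have "Q\<^sub>J > 0" unfolding Q\<^sub>J_def using \<open>finite J\<close> False pos by (intro sum_pos) auto
    have "Q\<^sub>J \<le> Q" unfolding Q\<^sub>J_def Q_def by (rule sum_mono2[OF fin \<open>J \<subseteq> I\<close>]) (use nonneg in auto)
    \<comment> \<open>the terms outside \<open>J\<close> only enlarge \<open>Q\<close>, which enters with the negative exponent \<open>1 - \<alpha>\<close>\<close>
    then have "P powr \<alpha> * Q powr (1 - \<alpha>) \<le> P powr \<alpha> * Q\<^sub>J powr (1 - \<alpha>)"
      using alpha \<open>Q\<^sub>J > 0\<close> by (intro mult_left_mono powr_mono2') auto
    also have "\<dots> \<le> (\<Sum>i\<in>J. lam i * (p i powr \<alpha> * q i powr (1 - \<alpha>)))"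
      unfolding P_eq Q\<^sub>J_def using \<open>finite J\<close> False pos alpha by (rule sum_powr_perspective_le)
    finally have "renyi_integrand \<alpha> P Q \<le> (\<Sum>i\<in>J. ennreal (lam i * (p i powr \<alpha> * q i powr (1 - \<alpha>))))"
      using \<open>Q\<^sub>J > 0\<close> \<open>Q\<^sub>J \<le> Q\<close> pos
      by (simp add: renyi_integrand_def sum_ennreal ennreal_leI less_imp_le)
    also have "\<dots> = (\<Sum>i\<in>J. ennreal (lam i) * renyi_integrand \<alpha> (p i) (q i))"
      by (intro sum.cong refl) (use pos in \<open>force simp: less_imp_le renyi_integrand_def ennreal_mult\<close>)
    also have "\<dots> \<le> (\<Sum>i\<in>I. ennreal (lam i) * renyi_integrand \<alpha> (p i) (q i))"
      by (rule sum_mono2[OF fin \<open>J \<subseteq> I\<close>]) auto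
    finally show ?thesis unfolding P_def Q_def .
  qed
qed

lemma renyi_Lambda_sum_le:
  fixes f g :: "'i \<Rightarrow> 'b::euclidean_space \<Rightarrow> real"
  assumes fin: "finite I" and lam: "\<And>i. i \<in> I \<Longrightarrow> lam i \<ge> 0"
    and nonneg: "\<And>i z. i \<in> I \<Longrightarrow> f i z \<ge> 0 \<and> g i z \<ge> 0"
    and meas: "\<And>i. i \<in> I \<Longrightarrow> f i \<in> borel_measurable lborel \<and> g i \<in> borel_measurable lborel"
    and alpha: "\<alpha> > 1"
  shows "renyi_Lambda \<alpha> (\<lambda>z. \<Sum>i\<in>I. lam i * f i z) (\<lambda>z. \<Sum>i\<in>I. lam i * g i z)
     \<le> (\<Sum>i\<in>I. ennreal (lam i) * renyi_Lambda \<alpha> (f i) (g i))"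
proof -
  have "renyi_Lambda \<alpha> (\<lambda>z. \<Sum>i\<in>I. lam i * f i z) (\<lambda>z. \<Sum>i\<in>I. lam i * g i z)
     \<le> (\<integral>\<^sup>+ z. (\<Sum>i\<in>I. ennreal (lam i) * renyi_integrand \<alpha> (f i z) (g i z)) \<partial>lborel)"
    unfolding renyi_Lambda_eq_nn_integral
    by (intro nn_integral_mono renyi_integrand_sum_le[OF fin _ alpha]) (simp add: lam nonneg)
  also have "\<dots> = (\<Sum>i\<in>I. ennreal (lam i) * renyi_Lambda \<alpha> (f i) (g i))"
  proof -
    have "(\<lambda>z. renyi_integrand \<alpha> (f i z) (g i z)) \<in> borel_measurable lborel" if "i \<in> I" for i
      using meas[OF that] by (intro borel_measurable_renyi_integrand) auto
    then show ?thesis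
      unfolding renyi_Lambda_eq_nn_integral
      by (subst nn_integral_sum) (auto intro!: sum.cong nn_integral_cmult)
  qed
  finally show ?thesis .
qed

lemma renyi_Lambda_average_le:
  fixes f g :: "'i \<Rightarrow> 'b::euclidean_space \<Rightarrow> real"
  assumes fin: "finite I" and "I \<noteq> {}"
    and nonneg: "\<And>i z. i \<in> I \<Longrightarrow> f i z \<ge> 0 \<and> g i z \<ge> 0"
    and meas: "\<And>i. i \<in> I \<Longrightarrow> f i \<in> borel_measurable lborel \<and> g i \<in> borel_measurable lborel"
    and alpha: "\<alpha> > 1" and bound: "\<And>i. i \<in> I \<Longrightarrow> renyi_Lambda \<alpha> (f i) (g i) \<le> M"
  shows "renyi_Lambda \<alpha> (\<lambda>z. (\<Sum>i\<in>I. f i z) / real (card I)) (\<lambda>z. (\<Sum>i\<in>I. g i z) / real (card I))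
    \<le> M"
proof -
  define c where "c = 1 / real (card I)"
  have "card I > 0" using fin \<open>I \<noteq> {}\<close> by (simp add: card_gt_0_iff)
  have "renyi_Lambda \<alpha> (\<lambda>z. (\<Sum>i\<in>I. f i z) / real (card I)) (\<lambda>z. (\<Sum>i\<in>I. g i z) / real (card I))
      = renyi_Lambda \<alpha> (\<lambda>z. \<Sum>i\<in>I. c * f i z) (\<lambda>z. \<Sum>i\<in>I. c * g i z)"
    by (simp add: c_def sum_divide_distrib)
  also have "\<dots> \<le> (\<Sum>i\<in>I. ennreal c * renyi_Lambda \<alpha> (f i) (g i))"
    by (rule renyi_Lambda_sum_le[OF fin _ nonneg meas alpha]) (simp_all add: c_def)
  also have "\<dots> \<le> (\<Sum>i\<in>I. ennreal c * M)"
    by (intro sum_mono mult_left_mono bound) simp_all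
  also have "\<dots> = M"
    using \<open>card I > 0\<close>
    by (simp add: c_def ennreal_of_nat_eq_real_of_nat ennreal_mult[symmetric] mult.assoc[symmetric])
  finally show ?thesis .
qed

definition replace :: "'a set \<Rightarrow> 'a \<Rightarrow> 'a \<Rightarrow> 'a set" where
  "replace y c a = insert a (y - {c})"

lemma subst_nb_replace: "c \<in> y \<Longrightarrow> a \<notin> y \<Longrightarrow> subst_nb y (replace y c a)"
  unfolding subst_nb_def replace_def by blast

lemma card_replace: "finite y \<Longrightarrow> c \<in> y \<Longrightarrow> a \<notin> y \<Longrightarrow> card (replace y c a) = card y"
  unfolding replace_def using card.remove[of y c] by simp

lemma replace_replace: "a \<notin> y \<Longrightarrow> replace (replace y c a) a a' = replace y c a'"
  unfolding replace_def by auto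

lemma subst_nb_replace_replace:
  assumes "c \<in> y" "a \<notin> y" "a' \<notin> y" "a \<noteq> a'"
  shows "subst_nb (replace y c a) (replace y c a')"
  using subst_nb_replace[of a "replace y c a" a'] assms by (simp add: replace_replace) (auto simp: replace_def)

lemma subst_dist_self: "subst_dist u u = 0"
  unfolding subst_dist_def by (auto simp: zero_enat_def intro: exI[of _ 0])

lemma subst_dist_le_1_if_subst_nb: "subst_nb u v \<Longrightarrow> subst_dist u v \<le> 1"
proof -
  assume "subst_nb u v"
  then have "(subst_nb ^^ 1) u v" by (simp add: OO_def)
  then have "\<exists>n. (subst_nb ^^ n) u v" and "(LEAST n. (subst_nb ^^ n) u v) \<le> 1"
    by (blast, rule Least_le)
  then show ?thesis
    unfolding subst_dist_def one_enat_def by simp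
qed

definition coupling_pairs :: "'a set \<Rightarrow> 'a \<Rightarrow> nat \<Rightarrow> ('a set \<times> 'a) set" where
  "coupling_pairs x a q = (SIGMA y:{y. y \<subseteq> x - {a} \<and> card y = q}. y)"

lemma finite_coupling_pairs: "finite x \<Longrightarrow> finite (coupling_pairs x a q)"
  unfolding coupling_pairs_def by (auto intro!: finite_SigmaI intro: finite_subset)

lemma sum_coupling_pairs_fst:
  assumes "finite x"
  shows "(\<Sum>p\<in>coupling_pairs x a q. f (fst p)) = of_nat q * (\<Sum>y | y \<subseteq> x - {a} \<and> card y = q. f y)"
proof -
  have "(\<Sum>p\<in>coupling_pairs x a q. f (fst p)) = (\<Sum>y | y \<subseteq> x - {a} \<and> card y = q. \<Sum>c\<in>y. f y)"
    unfolding coupling_pairs_def using assms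
    by (subst sum.Sigma) (auto intro: finite_subset simp: split_beta)
  also have "\<dots> = (\<Sum>y | y \<subseteq> x - {a} \<and> card y = q. of_nat q * f y)"
    by (intro sum.cong) auto
  finally show ?thesis by (simp add: sum_distrib_left)
qed

lemma card_coupling_pairs:
  assumes "finite x" "a \<in> x"
  shows "card (coupling_pairs x a q) = q * (card x - 1 choose q)"
  using sum_coupling_pairs_fst[OF assms(1), where f = "\<lambda>_. 1::nat" and a = a and q = q] assms
  by (simp add: n_subsets)

lemma coupling_pairs_replace_fibre:
  assumes "finite x" "y \<subseteq> x" "a \<in> y" "card y = q"
  shows "{p \<in> coupling_pairs x a q. replace (fst p) (snd p) a = y} = (\<lambda>c. (replace y a c, c)) ` (x - y)"
proof (intro equalityI subsetI)
  fix p assume "p \<in> {p \<in> coupling_pairs x a q. replace (fst p) (snd p) a = y}"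
  then obtain y' c where p: "p = (y', c)" "y' \<subseteq> x - {a}" "c \<in> y'" "replace y' c a = y"
    unfolding coupling_pairs_def by auto
  then have "c \<in> x - y" and "y' = replace y a c"
    by (auto simp: replace_def)
  with p show "p \<in> (\<lambda>c. (replace y a c, c)) ` (x - y)" by blast
next
  fix p assume "p \<in> (\<lambda>c. (replace y a c, c)) ` (x - y)"
  then obtain c where p: "p = (replace y a c, c)" and c: "c \<in> x" "c \<notin> y" by blast
  have "card (replace y a c) = q"
    using assms c by (simp add: card_replace finite_subset)
  moreover have "replace y a c \<subseteq> x - {a}" "replace (replace y a c) c a = y"
    using assms c by (auto simp: replace_def)
  ultimately show "p \<in> {p \<in> coupling_pairs x a q. replace (fst p) (snd p) a = y}"
    unfolding coupling_pairs_def p by (auto simp: replace_def)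
qed

lemma sum_coupling_pairs_replace:
  assumes "finite x" "a \<in> x"
  shows "(\<Sum>p\<in>coupling_pairs x a q. f (replace (fst p) (snd p) a))
    = of_nat (card x - q) * (\<Sum>y | y \<subseteq> x \<and> card y = q \<and> a \<in> y. f y)"
proof -
  let ?Y = "{y. y \<subseteq> x \<and> card y = q \<and> a \<in> y}"
  have "(\<lambda>p. replace (fst p) (snd p) a) ` coupling_pairs x a q \<subseteq> ?Y"
  proof (clarsimp simp: coupling_pairs_def)
    fix y c assume "y \<subseteq> x - {a}" "c \<in> y"
    moreover from this assms have "card (replace y c a) = card y"
      by (intro card_replace) (auto intro: finite_subset)
    ultimately show "replace y c a \<subseteq> x \<and> card (replace y c a) = card y \<and> a \<in> replace y c a"
      using assms by (auto simp: replace_def)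
  qed
  then have "(\<Sum>p\<in>coupling_pairs x a q. f (replace (fst p) (snd p) a))
      = (\<Sum>y\<in>?Y. \<Sum>p | p \<in> coupling_pairs x a q \<and> replace (fst p) (snd p) a = y. f y)"
    using assms by (subst sum.group[symmetric]) (auto simp: finite_coupling_pairs)
  also have "\<dots> = (\<Sum>y\<in>?Y. of_nat (card x - q) * f y)"
  proof (intro sum.cong refl)
    fix y assume y: "y \<in> ?Y"
    have "card {p \<in> coupling_pairs x a q. replace (fst p) (snd p) a = y} = card (x - y)"
      using y assms by (simp add: coupling_pairs_replace_fibre card_image inj_on_def)
    also have "\<dots> = card x - q"
      using y assms by (metis (mono_tags, lifting) card_Diff_subset finite_subset mem_Collect_eq)
    finally show "(\<Sum>p | p \<in> coupling_pairs x a q \<and> replace (fst p) (snd p) a = y. f y) = of_nat (card x - q) * f y"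
      by simp
  qed
  finally show ?thesis by (simp add: sum_distrib_left)
qed

lemma sum_coupling_pairs_mixture:
  fixes f :: "'a set \<Rightarrow> 'b::comm_ring_1"
  assumes "finite x" "a \<in> x"
  shows "(\<Sum>p\<in>coupling_pairs x a q. (1 - w) * f (fst p) + w * f (replace (fst p) (snd p) a))
    = (1 - w) * (of_nat q * (\<Sum>y | y \<subseteq> x - {a} \<and> card y = q. f y))
      + w * (of_nat (card x - q) * (\<Sum>y | y \<subseteq> x \<and> card y = q \<and> a \<in> y. f y))"
  using assms by (simp add: sum.distrib sum_coupling_pairs_fst sum_coupling_pairs_replace
      flip: sum_distrib_left)

lemma mech_eq_sum_subsets:
  fixes B :: "'a::finite set \<Rightarrow> 'b \<Rightarrow> real"
  shows "mech B q x z = (\<Sum>y | y \<subseteq> x \<and> card y = q. B y z) / real (card x choose q)"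
proof -
  have "mech B q x z = (\<Sum>y\<in>batches q. if y \<subseteq> x then B y z / real (card x choose q) else 0)"
    unfolding mech_def subsample_def batches_def by (intro sum.cong) auto
  also have "\<dots> = (\<Sum>y | y \<subseteq> x \<and> card y = q. B y z / real (card x choose q))"
    by (simp add: sum.If_cases batches_def Int_def conj_commute)
  finally show ?thesis by (simp add: sum_divide_distrib)
qed

lemma mech_batch_size_zero:
  fixes B :: "'a::finite set \<Rightarrow> 'b \<Rightarrow> real"
  shows "mech B 0 x = B {}"
proof -
  have "{y. y \<subseteq> x \<and> card y = 0} = {{}}" by auto
  then show ?thesis by (simp add: fun_eq_iff mech_eq_sum_subsets)
qed

lemma mech_eq_coupling_average:
  fixes B :: "'a::finite set \<Rightarrow> 'b \<Rightarrow> real"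
  assumes "a \<in> x" "0 < q" "q < card x"
  shows "mech B q x z = (\<Sum>p\<in>coupling_pairs x a q.
      (1 - real q / real (card x)) * B (fst p) z + real q / real (card x) * B (replace (fst p) (snd p) a) z)
      / real (card (coupling_pairs x a q))"
proof -
  define N where "N = card x"
  define S\<^sub>1 where "S\<^sub>1 = (\<Sum>y | y \<subseteq> x - {a} \<and> card y = q. B y z)"
  define S\<^sub>2 where "S\<^sub>2 = (\<Sum>y | y \<subseteq> x \<and> card y = q \<and> a \<in> y. B y z)"
  have "q < N" "N > 0" using assms by (auto simp: N_def)
  have "{y. y \<subseteq> x \<and> card y = q} = {y. y \<subseteq> x - {a} \<and> card y = q} \<union> {y. y \<subseteq> x \<and> card y = q \<and> a \<in> y}"
    by auto
  then have mech: "mech B q x z = (S\<^sub>1 + S\<^sub>2) / real (N choose q)"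
    unfolding mech_eq_sum_subsets S\<^sub>1_def S\<^sub>2_def N_def by (subst sum.union_disjoint[symmetric]) auto
  have "(\<Sum>p\<in>coupling_pairs x a q.
      (1 - real q / real N) * B (fst p) z + real q / real N * B (replace (fst p) (snd p) a) z)
      = (1 - real q / real N) * (real q * S\<^sub>1) + real q / real N * (real (N - q) * S\<^sub>2)"
    unfolding S\<^sub>1_def S\<^sub>2_def N_def by (rule sum_coupling_pairs_mixture) (simp_all add: assms)
  also have "\<dots> = real q * (real N - real q) / real N * (S\<^sub>1 + S\<^sub>2)"
    using \<open>q < N\<close> \<open>N > 0\<close> by (simp add: of_nat_diff field_simps)
  finally have sum_eq: "(\<Sum>p\<in>coupling_pairs x a q.
      (1 - real q / real N) * B (fst p) z + real q / real N * B (replace (fst p) (snd p) a) z)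
      = real q * (real N - real q) / real N * (S\<^sub>1 + S\<^sub>2)" .
  have "(N - q) * (N choose q) = N * (N - 1 choose q)" by (rule binomial_absorb_comp)
  then have absorb: "(real N - real q) * real (N choose q) = real N * real (N - 1 choose q)"
    using \<open>q < N\<close> by (metis of_nat_diff of_nat_mult less_imp_le)
  have card_pairs: "real (card (coupling_pairs x a q)) = real q * real (N - 1 choose q)"
    using assms by (simp add: card_coupling_pairs N_def)
  have "real q * (real N - real q) / real N * (S\<^sub>1 + S\<^sub>2) / (real q * real (N - 1 choose q))
      = (real N - real q) * (S\<^sub>1 + S\<^sub>2) / (real N * real (N - 1 choose q))"
    using \<open>q > 0\<close> by simp
  also have "\<dots> = (real N - real q) * (S\<^sub>1 + S\<^sub>2) / ((real N - real q) * real (N choose q))"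
    by (simp only: absorb)
  also have "\<dots> = mech B q x z"
    using \<open>q < N\<close> by (simp add: mech)
  finally show ?thesis
    unfolding N_def[symmetric] sum_eq card_pairs by simp
qed

lemma renyi_Lambda_mech_replace_le:
  fixes B :: "'a::finite set \<Rightarrow> 'b::euclidean_space \<Rightarrow> real"
  assumes dens: "\<forall>y\<in>batches q. is_density (B y)" and alpha: "\<alpha> > 1"
    and a: "a \<in> x" "a' \<notin> x" and q: "0 < q" "q < card x"
    and bound: "\<And>y c. y \<in> batches q \<Longrightarrow> c \<in> y \<Longrightarrow> a \<notin> y \<Longrightarrow> a' \<notin> y \<Longrightarrow>
      renyi_Lambda \<alpha>
        (\<lambda>z. (1 - real q / real (card x)) * B y z + real q / real (card x) * B (replace y c a) z)
        (\<lambda>z. (1 - real q / real (card x)) * B y z + real q / real (card x) * B (replace y c a') z) \<le> M"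
  shows "renyi_Lambda \<alpha> (mech B q x) (mech B q (replace x a a')) \<le> M"
proof -
  define w where "w = real q / real (card x)"
  define P where "P = coupling_pairs x a q"
  define mix where "mix b p z = (1 - w) * B (fst p) z + w * B (replace (fst p) (snd p) b) z" for b p z
  have "0 \<le> w" "w \<le> 1" using q by (simp_all add: w_def)
  have "card (replace x a a') = card x"
    using a by (simp add: card_replace)
  moreover have "a' \<in> replace x a a'" "replace x a a' - {a'} = x - {a}"
    using a by (auto simp: replace_def)
  ultimately have mech: "mech B q x = (\<lambda>z. (\<Sum>p\<in>P. mix a p z) / real (card P))"
    "mech B q (replace x a a') = (\<lambda>z. (\<Sum>p\<in>P. mix a' p z) / real (card P))"
    using mech_eq_coupling_average[of a x q B] mech_eq_coupling_average[of a' "replace x a a'" q B] a q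
    by (simp_all add: fun_eq_iff P_def mix_def w_def coupling_pairs_def)
  have mem: "fst p \<in> batches q" "snd p \<in> fst p" "a \<notin> fst p" "a' \<notin> fst p" if "p \<in> P" for p
    using that a by (auto simp: P_def coupling_pairs_def batches_def)
  have replace_mem: "replace (fst p) (snd p) b \<in> batches q" if "p \<in> P" "b \<notin> fst p" for p b
    using mem[OF \<open>p \<in> P\<close>] that by (simp add: batches_def card_replace)
  show ?thesis
    unfolding mech
  proof (rule renyi_Lambda_average_le[OF _ _ _ _ alpha])
    show "finite P" "P \<noteq> {}"
      using card_coupling_pairs[of x a q] a q by (auto simp: P_def)
    fix p assume "p \<in> P"
    have "is_density (B (fst p))" "is_density (B (replace (fst p) (snd p) a))"
      "is_density (B (replace (fst p) (snd p) a'))"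
      using dens mem[OF \<open>p \<in> P\<close>] replace_mem[OF \<open>p \<in> P\<close>] by blast+
    then show "mix a p \<in> borel_measurable lborel \<and> mix a' p \<in> borel_measurable lborel"
      "\<And>z. mix a p z \<ge> 0 \<and> mix a' p z \<ge> 0"
      using \<open>0 \<le> w\<close> \<open>w \<le> 1\<close> unfolding is_density_def mix_def[abs_def] by auto
    show "renyi_Lambda \<alpha> (mix a p) (mix a' p) \<le> M"
      unfolding mix_def[abs_def] w_def using mem[OF \<open>p \<in> P\<close>] by (intro bound)
  qed
qed

lemma Max_ge_setcompr4:
  fixes F :: "'a::finite \<Rightarrow> 'b::finite \<Rightarrow> 'c::finite \<Rightarrow> 'd::finite \<Rightarrow> 'e::linorder"
  assumes "P u v s t"
  shows "F u v s t \<le> Max {F u v s t | u v s t. P u v s t}"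
proof (rule Max_ge)
  show "finite {F u v s t | u v s t. P u v s t}"
    by (rule finite_subset[of _ "(\<lambda>(u, v, s, t). F u v s t) ` UNIV"]) (auto simp: image_iff, blast)
qed (use assms in blast)

theorem mainTheorem11:
  fixes B :: "'a::finite set \<Rightarrow> 'b::euclidean_space \<Rightarrow> real"
    and q N :: nat and \<alpha> :: real and x x' :: "'a set"
  assumes dens: "\<forall>y\<in>batches q. is_density (B y)"
    and alpha: "\<alpha> > 1"
    and nb: "subst_nb x x'"
    and size: "card x = N"
    and dsx: "q < card x" and dsx': "q < card x'"
  shows "renyi_Lambda \<alpha> (mech B q x) (mech B q x') \<le>
    Max {renyi_Lambda \<alpha>
           (\<lambda>z. (1 - real q / real N) * B y11 z + (real q / real N) * B y12 z)
           (\<lambda>z. (1 - real q / real N) * B y21 z + (real q / real N) * B y22 z)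
         | y11 y12 y21 y22.
           y11 \<in> batches q \<and> y12 \<in> batches q \<and> y21 \<in> batches q \<and> y22 \<in> batches q \<and>
           y11 = y21 \<and> subst_dist y11 y12 \<le> 1 \<and> subst_dist y11 y22 \<le> 1 \<and>
           subst_dist y12 y22 \<le> 1}"
proof -
  obtain a a' where a: "a \<in> x" "a' \<notin> x" and x': "x' = replace x a a'"
    using nb unfolding subst_nb_def replace_def by blast
  show ?thesis
  proof (cases "q = 0")
    case True
    then have "mech B q y = (\<lambda>z. (1 - real q / real N) * B {} z + (real q / real N) * B {} z)" for y
      by (simp add: mech_batch_size_zero)
    then show ?thesis
      by (simp only:) (rule Max_ge_setcompr4, simp add: True batches_def subst_dist_self)
  next
    case False
    have "a \<noteq> a'" using a by blast
    with False a show ?thesis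
      unfolding x' size[symmetric]
      by (intro renyi_Lambda_mech_replace_le[OF dens alpha a _ dsx] Max_ge_setcompr4)
        (auto simp: batches_def card_replace subst_dist_le_1_if_subst_nb subst_nb_replace
          subst_nb_replace_replace)
  qed
qed

end
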